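(* Let $(I_t)_{t\in\mathbb{Z}}$ be a stochastic process such that there exists a family $(I_t^n)_{t\in\mathbb{Z}}$, $n\in\mathbb{N}$, of $\{0,1\}$-valued stationary stochastic processes with $P(I_0^n=1)>0$ for all $n$ and $$\mathcal{L}\bigl((I_t^n)_{t\in\{-u,\dots,v\}}\mid I_0^n=1\bigr)\Longrightarrow \mathcal{L}\bigl((I_t)_{t\in\{-u,\dots,v\}}\bigr)\quad (n\to\infty)$$ for all $u,v\in\mathbb{N}$. Define $S^i=\sum_{t\in\mathbb{Z}}I_t\in\mathbb{N}\cup\{\infty\}$, $S_+^i=\sum_{t=1}^\infty I_t$, $S_-^i=\sum_{t=1}^\infty I_{-t}$, and let $S^i_{\pm}$ denote a random variable with the common distribution of $S_+^i$ and $S_-^i$ (these two distributions coincide). Then: (a) For all $k\in\mathbb{N}$, $P(S^i=k)=k\cdot\bigl[P(S^i_{\pm}=k-1)-P(S^i_{\pm}=k)\bigr]$. (b) For all $k\in\mathbb{N}$ with $P(S^i=k)>0$, $P(S_+^i=\ell\mid S^i=k)=P(S_-^i=\ell\mid S^i=k)=\frac1k$ for $\ell=0,\dots,k-1$. (c) If $P(S^i=\infty)>0$, then $P(S_+^i=\infty\mid S^i=\infty)=P(S_-^i=\infty\mid S^i=\infty)=1$.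
   Context: $\mathbb{N}=\{1,2,\dots\}$. $\mathcal{L}(\cdot\mid\cdot)$ denotes conditional law and $\Longrightarrow$ convergence in distribution. In (b) and (c) the paper writes $S^i_{\pm}$ inside the conditional probability, meaning the statement holds for each of $S^i_+$ and $S^i_-$. *)

theory Defs
  imports "HOL-Probability.Probability"
begin

definition window :: "nat \<Rightarrow> nat \<Rightarrow> (int \<Rightarrow> 'a \<Rightarrow> real) \<Rightarrow> 'a \<Rightarrow> (int \<Rightarrow> real)" where
  "window u v X \<omega> = (\<lambda>t. if t \<in> {- int u .. int v} then X t \<omega> else 0)"

definition stationary :: "'a measure \<Rightarrow> (int \<Rightarrow> 'a \<Rightarrow> real) \<Rightarrow> bool" where
  "stationary M X \<longleftrightarrow> (\<forall>h::int.
     distr M (PiM UNIV (\<lambda>_. borel)) (\<lambda>\<omega> t. X (t + h) \<omega>) =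
     distr M (PiM UNIV (\<lambda>_. borel)) (\<lambda>\<omega> t. X t \<omega>))"

definition cond_exp_ev :: "'a measure \<Rightarrow> 'a set \<Rightarrow> ('a \<Rightarrow> real) \<Rightarrow> real" where
  "cond_exp_ev M A f = (\<integral>\<omega>. indicator A \<omega> * f \<omega> \<partial>M) / measure M A"

definition cond_prob_ev :: "'a measure \<Rightarrow> 'a set \<Rightarrow> 'a set \<Rightarrow> real" where
  "cond_prob_ev M B A = measure M (B \<inter> A) / measure M A"

definition Splus :: "(int \<Rightarrow> 'a \<Rightarrow> real) \<Rightarrow> 'a \<Rightarrow> ennreal" where
  "Splus I \<omega> = (\<Sum>t. ennreal (I (int t + 1) \<omega>))"

definition Sminus :: "(int \<Rightarrow> 'a \<Rightarrow> real) \<Rightarrow> 'a \<Rightarrow> ennreal" where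
  "Sminus I \<omega> = (\<Sum>t. ennreal (I (- (int t + 1)) \<omega>))"

definition Stot :: "(int \<Rightarrow> 'a \<Rightarrow> real) \<Rightarrow> 'a \<Rightarrow> ennreal" where
  "Stot I \<omega> = Sminus I \<omega> + ennreal (I 0 \<omega>) + Splus I \<omega>"

end

theory Submission
  imports Defs
begin

(* Passing to the limit in the stationarity of the processes I^n conditioned on I^n_0 = 1 shows that
   the law of I satisfies the exchange formula E[I_s F(I)] = E[I_(-s) F(theta_(-s) I)] of Palm theory,
   where theta_h is the time shift. Summed over s, it becomes a mass-transport principle: for every
   measurable R, the expected number of ones s of I with R(I, theta_s I) equals the expected number of
   those with R(theta_s I, I).

   If R(y, z) says that y and z have k ones, of which l (for y) and l' (for z) lie left of the origin,
   each side counts exactly one point for each path of the corresponding event, so P(S = k, S_- = l)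
   does not depend on l < k. This is (b), and summing over k gives (a). If R(y, z) says that y has
   finitely many ones on the left and infinitely many on the right while z has none on the left, the
   first side is P(S_- < oo = S_+) and the second is oo * P(S_- = 0, S_+ = oo), so both vanish. Time
   reversal preserves the exchange formula and swaps S_+ and S_-; this yields the statements about
   S_+, the equality of the laws of S_+ and S_-, and (c). *)

section \<open>Counting the ones of a path\<close>

abbreviation path_space :: "(int \<Rightarrow> real) measure" where
  "path_space \<equiv> PiM UNIV (\<lambda>_. borel)"

abbreviation ecard :: "'b set \<Rightarrow> ennreal" where
  "ecard A \<equiv> emeasure (count_space UNIV) A"

definition time_shift :: "int \<Rightarrow> (int \<Rightarrow> 'b) \<Rightarrow> int \<Rightarrow> 'b" where
  "time_shift s y = (\<lambda>t. y (t + s))"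

definition Splus_path :: "(int \<Rightarrow> real) \<Rightarrow> ennreal" where
  "Splus_path = Splus (\<lambda>t y. y t)"

definition Sminus_path :: "(int \<Rightarrow> real) \<Rightarrow> ennreal" where
  "Sminus_path = Sminus (\<lambda>t y. y t)"

definition Stot_path :: "(int \<Rightarrow> real) \<Rightarrow> ennreal" where
  "Stot_path = Stot (\<lambda>t y. y t)"

lemma Splus_eq_path: "Splus X \<omega> = Splus_path (\<lambda>t. X t \<omega>)"
  and Sminus_eq_path: "Sminus X \<omega> = Sminus_path (\<lambda>t. X t \<omega>)"
  and Stot_eq_path: "Stot X \<omega> = Stot_path (\<lambda>t. X t \<omega>)"
  by (simp_all add: Splus_path_def Sminus_path_def Stot_path_def Splus_def Sminus_def Stot_def)

lemma Sminus_reflect: "Sminus (\<lambda>t. X (- t)) = Splus X"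
  and Splus_reflect: "Splus (\<lambda>t. X (- t)) = Sminus X"
  and Stot_reflect: "Stot (\<lambda>t. X (- t)) = Stot X"
  by (simp_all add: fun_eq_iff Sminus_def Splus_def Stot_def ac_simps)

lemma time_shift_0 [simp]: "time_shift 0 y = y"
  by (simp add: time_shift_def fun_eq_iff)

lemma time_shift_time_shift [simp]: "time_shift r (time_shift s y) = time_shift (r + s) y"
  by (simp add: time_shift_def fun_eq_iff ac_simps)

lemma measurable_time_shift [measurable]: "time_shift s \<in> measurable path_space path_space"
  unfolding time_shift_def by (rule measurable_PiM_single') (auto simp: space_PiM)

lemma measurable_Splus_path [measurable]: "Splus_path \<in> borel_measurable path_space"
  unfolding Splus_path_def Splus_def by measurable

lemma measurable_Sminus_path [measurable]: "Sminus_path \<in> borel_measurable path_space"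
  unfolding Sminus_path_def Sminus_def by measurable

lemma measurable_Stot_path [measurable]: "Stot_path \<in> borel_measurable path_space"
  unfolding Stot_path_def Stot_def Sminus_def Splus_def by measurable

lemma measurable_path [measurable (raw)]:
  "(\<And>t. X t \<in> borel_measurable N) \<Longrightarrow> (\<lambda>\<omega> t. X t \<omega>) \<in> measurable N path_space"
  by (rule measurable_PiM_single') (auto simp: space_PiM)

lemma ecard_eq_top_iff: "ecard A = \<top> \<longleftrightarrow> infinite A"
  by (simp add: emeasure_count_space)

lemma suminf_zero_one_eq_ecard:
  fixes z :: "'b \<Rightarrow> real"
  assumes f: "inj f" and z: "\<And>n. z (f n) \<in> {0, 1}"
  shows "(\<Sum>n. ennreal (z (f n))) = ecard {t \<in> range f. z t = 1}"
proof -
  have "ennreal (z (f n)) = indicator {n. z (f n) = 1} n" for n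
    using z[of n] by (auto simp: indicator_def)
  then have "(\<Sum>n. ennreal (z (f n))) = (\<integral>\<^sup>+n. indicator {n. z (f n) = 1} n \<partial>count_space UNIV)"
    by (simp add: nn_integral_count_space_nat)
  also have "\<dots> = ecard {n. z (f n) = 1}"
    by simp
  also have "\<dots> = ecard (f ` {n. z (f n) = 1})"
    using f by (simp add: emeasure_count_space card_image finite_image_iff inj_on_subset)
  also have "f ` {n. z (f n) = 1} = {t \<in> range f. z t = 1}"
    by auto
  finally show ?thesis .
qed

lemma Sminus_path_time_shift:
  assumes "range y \<subseteq> {0, 1}"
  shows "Sminus_path (time_shift s y) = ecard {t. t < s \<and> y t = 1}"
proof -
  have "Sminus_path (time_shift s y) = (\<Sum>n. ennreal (y (s - int n - 1)))"
    by (simp add: Sminus_path_def Sminus_def time_shift_def algebra_simps)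
  also have "\<dots> = ecard {t \<in> range (\<lambda>n. s - int n - 1). y t = 1}"
    using assms by (intro suminf_zero_one_eq_ecard[where f="\<lambda>n. s - int n - 1"]) (auto simp: inj_def)
  also have "range (\<lambda>n. s - int n - 1) = {t. t < s}"
    by (auto simp: image_iff intro!: exI[of _ "nat (s - 1 - _)"])
  finally show ?thesis by simp
qed

lemma Splus_path_time_shift:
  assumes "range y \<subseteq> {0, 1}"
  shows "Splus_path (time_shift s y) = ecard {t. s < t \<and> y t = 1}"
proof -
  have "Splus_path (time_shift s y) = (\<Sum>n. ennreal (y (s + int n + 1)))"
    by (simp add: Splus_path_def Splus_def time_shift_def algebra_simps)
  also have "\<dots> = ecard {t \<in> range (\<lambda>n. s + int n + 1). y t = 1}"
    using assms by (intro suminf_zero_one_eq_ecard[where f="\<lambda>n. s + int n + 1"]) (auto simp: inj_def)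
  also have "range (\<lambda>n. s + int n + 1) = {t. s < t}"
    by (auto simp: image_iff intro!: exI[of _ "nat (_ - s - 1)"])
  finally show ?thesis by simp
qed

lemma Stot_path_eq: "Stot_path y = Sminus_path y + ennreal (y 0) + Splus_path y"
  by (simp add: Stot_path_def Sminus_path_def Splus_path_def Stot_def)

lemma Stot_path_time_shift:
  assumes y: "range y \<subseteq> {0, 1}"
  shows "Stot_path (time_shift s y) = ecard {t. y t = 1}"
proof -
  have "ennreal (y s) = ecard {t. t = s \<and> y t = 1}"
  proof (cases "y s = 1")
    case True
    then have "{t. t = s \<and> y t = 1} = {s}"
      by auto
    with True show ?thesis
      by simp
  next
    case False
    with y have "y s = 0"
      by auto
    moreover from False have "{t. t = s \<and> y t = 1} = {}"
      by auto
    ultimately show ?thesis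
      by (simp only: ennreal_0 emeasure_empty)
  qed
  then have "Stot_path (time_shift s y)
      = ecard {t. t < s \<and> y t = 1} + ecard {t. t = s \<and> y t = 1} + ecard {t. s < t \<and> y t = 1}"
    using Stot_path_eq[of "time_shift s y"] Sminus_path_time_shift[OF y, of s] Splus_path_time_shift[OF y, of s]
    by (simp add: time_shift_def)
  also have "\<dots> = ecard ({t. t < s \<and> y t = 1} \<union> {t. t = s \<and> y t = 1}) + ecard {t. s < t \<and> y t = 1}"
    by (subst plus_emeasure) auto
  also have "\<dots> = ecard ({t. t < s \<and> y t = 1} \<union> {t. t = s \<and> y t = 1} \<union> {t. s < t \<and> y t = 1})"
    by (subst plus_emeasure) auto
  also have "{t. t < s \<and> y t = 1} \<union> {t. t = s \<and> y t = 1} \<union> {t. s < t \<and> y t = 1} = {t. y t = 1}"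
    by auto
  finally show ?thesis .
qed

lemma Sminus_path_eq_ecard: "range y \<subseteq> {0, 1} \<Longrightarrow> Sminus_path y = ecard {t. t < 0 \<and> y t = 1}"
  and Splus_path_eq_ecard: "range y \<subseteq> {0, 1} \<Longrightarrow> Splus_path y = ecard {t. 0 < t \<and> y t = 1}"
  and Stot_path_eq_ecard: "range y \<subseteq> {0, 1} \<Longrightarrow> Stot_path y = ecard {t. y t = 1}"
  using Sminus_path_time_shift[of y 0] Splus_path_time_shift[of y 0] Stot_path_time_shift[of y 0] by simp_all

lemma Sminus_path_less_Stot_path:
  assumes y: "range y \<subseteq> {0, 1}" and y0: "y 0 = 1" and k: "Stot_path y = of_nat k"
  shows "\<exists>l<k. Sminus_path y = of_nat l"
proof -
  have "finite {t. y t = 1}"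
    using k Stot_path_eq_ecard[OF y] ecard_eq_top_iff[of "{t. y t = 1}"] by simp
  then have "finite {t. t < 0 \<and> y t = 1}"
    by (rule rev_finite_subset) auto
  then have l: "Sminus_path y = of_nat (card {t. t < 0 \<and> y t = 1})"
    using Sminus_path_eq_ecard[OF y] by simp
  moreover have "Sminus_path y + 1 \<le> of_nat k"
    using k y0 by (simp add: Stot_path_eq flip: k)
  ultimately have "of_nat (card {t. t < 0 \<and> y t = 1}) + 1 \<le> (of_nat k :: ennreal)"
    by simp
  then have "card {t. t < 0 \<and> y t = 1} < k"
    by (simp add: ennreal_of_nat_eq_real_of_nat flip: ennreal_1 ennreal_plus)
  with l show ?thesis
    by blast
qed

lemma ecard_ones_eq_nn_integral:
  assumes "range y \<subseteq> {0, 1}"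
  shows "ecard {s. y s = 1 \<and> P s} = (\<integral>\<^sup>+s. ennreal (y s) * indicator {s. P s} s \<partial>count_space UNIV)"
proof -
  have "ennreal (y s) * indicator {s. P s} s = indicator {s. y s = 1 \<and> P s} s" for s
  proof -
    have "y s = 0 \<or> y s = 1"
      using assms by auto
    then show ?thesis
      by (auto simp: indicator_def)
  qed
  then show ?thesis
    by simp
qed

lemma bij_betw_card_less:
  fixes B :: "'b::linorder set"
  assumes B: "finite B"
  shows "bij_betw (\<lambda>s. card {t \<in> B. t < s}) B {..<card B}"
proof -
  let ?rank = "\<lambda>s. card {t \<in> B. t < s}"
  have mono: "?rank s < ?rank s'" if "s \<in> B" "s < s'" for s s'
    by (rule psubset_card_mono) (use B that in auto)
  have inj: "inj_on ?rank B"
  proof (rule inj_onI)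
    fix s s' assume "s \<in> B" "s' \<in> B" "?rank s = ?rank s'"
    then show "s = s'"
      by (cases s s' rule: linorder_cases) (auto dest: mono)
  qed
  have "?rank s < card B" if "s \<in> B" for s
    by (rule psubset_card_mono) (use B that in auto)
  then have "?rank ` B \<subseteq> {..<card B}"
    by auto
  moreover have "card (?rank ` B) = card {..<card B}"
    using card_image[OF inj] by simp
  ultimately have "?rank ` B = {..<card B}"
    by (intro card_subset_eq) auto
  with inj show ?thesis
    by (simp add: bij_betw_def)
qed

lemma ecard_rank_eq_1:
  fixes A :: "'b::linorder set"
  assumes fin: "finite {t \<in> A. t \<le> a}" and l: "l < card {t \<in> A. t \<le> a}"
  shows "ecard {s \<in> A. ecard {t \<in> A. t < s} = of_nat l} = 1"
proof -
  define B where "B = {t \<in> A. t \<le> a}"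
  have bij: "bij_betw (\<lambda>s. card {t \<in> B. t < s}) B {..<card B}"
    unfolding B_def by (rule bij_betw_card_less[OF fin])
  have "l \<in> (\<lambda>s. card {t \<in> B. t < s}) ` B"
    using bij_betw_imp_surj_on[OF bij] l by (simp add: B_def)
  then obtain s0 where s0: "s0 \<in> B" "card {t \<in> B. t < s0} = l"
    by (auto simp: image_iff)
  have "ecard {t \<in> A. t < s} = of_nat l \<longleftrightarrow> s = s0" if s: "s \<in> A" for s
  proof (cases "s \<in> B")
    case True
    then have "{t \<in> A. t < s} = {t \<in> B. t < s}"
      by (auto simp: B_def)
    moreover have "finite {t \<in> B. t < s}"
      using fin unfolding B_def by (rule rev_finite_subset) auto
    ultimately show ?thesis
      using inj_on_eq_iff[OF bij_betw_imp_inj_on[OF bij] True s0(1)] s0(2) by simp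
  next
    case False
    then have "B \<subseteq> {t \<in> A. t < s}"
      using s by (auto simp: B_def)
    then have "emeasure (count_space UNIV) B \<le> ecard {t \<in> A. t < s}"
      by (intro emeasure_mono) auto
    moreover have "of_nat l < emeasure (count_space UNIV) B"
      using fin l by (simp add: B_def)
    ultimately show ?thesis
      using False s0(1) by auto
  qed
  then have "{s \<in> A. ecard {t \<in> A. t < s} = of_nat l} = {s0}"
    using s0(1) by (auto simp: B_def)
  then show ?thesis
    by simp
qed

lemma ecard_ones_of_rank_eq_1:
  assumes y: "range y \<subseteq> {0, 1}" and k: "Stot_path y = of_nat k" and l: "l < k"
  shows "ecard {s. y s = 1 \<and> Sminus_path (time_shift s y) = of_nat l} = 1"
proof -
  let ?A = "{t. y t = 1}"
  have "ecard ?A = of_nat k"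
    using k Stot_path_time_shift[OF y, of 0] by simp
  then have fin: "finite ?A" and card: "card ?A = k"
    by (auto simp: emeasure_count_space split: if_splits)
  then have "?A \<noteq> {}"
    using l by (intro notI) simp
  then have "{t \<in> ?A. t \<le> Max ?A} = ?A"
    using fin by auto
  then have "ecard {s \<in> ?A. ecard {t \<in> ?A. t < s} = of_nat l} = 1"
    using ecard_rank_eq_1[of ?A "Max ?A" l] fin card l by simp
  then show ?thesis
    by (simp add: Sminus_path_time_shift[OF y] conj_commute)
qed

lemma ecard_first_one_eq_1:
  assumes y: "range y \<subseteq> {0, 1}" and y0: "y 0 = 1" and fin: "Sminus_path y \<noteq> \<infinity>"
  shows "ecard {s. y s = 1 \<and> Sminus_path (time_shift s y) = 0} = 1"
proof -
  let ?A = "{t. y t = 1}"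
  have "finite {t \<in> ?A. t < 0}"
    using fin Sminus_path_time_shift[OF y, of 0] by (simp add: ecard_eq_top_iff conj_commute)
  then have "finite (insert 0 {t \<in> ?A. t < 0})"
    by simp
  moreover have "{t \<in> ?A. t \<le> 0} = insert 0 {t \<in> ?A. t < 0}"
    using y0 by auto
  ultimately have "ecard {s \<in> ?A. ecard {t \<in> ?A. t < s} = of_nat 0} = 1"
    by (intro ecard_rank_eq_1[where a=0]) auto
  then show ?thesis
    by (simp add: Sminus_path_time_shift[OF y] conj_commute)
qed

lemma ecard_ones_finite_left_infinite_right:
  assumes y: "range y \<subseteq> {0, 1}" and none_left: "Sminus_path y = 0"
  shows "ecard {s. y s = 1 \<and> Sminus_path (time_shift s y) \<noteq> \<infinity> \<and> Splus_path (time_shift s y) = \<infinity>}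
    = (if Splus_path y = \<infinity> then \<infinity> else 0)"
proof -
  have nonneg: "0 \<le> s" if "y s = 1" for s
    using none_left that Sminus_path_time_shift[OF y, of 0] by (force simp: emeasure_count_space_eq_0)
  have "Sminus_path (time_shift s y) \<noteq> \<infinity>" if "y s = 1" for s
  proof -
    have "{t. t < s \<and> y t = 1} \<subseteq> {0..<s}"
      using nonneg by auto
    then show ?thesis
      by (simp add: Sminus_path_time_shift[OF y] ecard_eq_top_iff finite_subset)
  qed
  moreover have "Splus_path (time_shift s y) = \<infinity> \<longleftrightarrow> Splus_path y = \<infinity>" if "y s = 1" for s
  proof -
    have "{t. s < t \<and> y t = 1} \<subseteq> {t. 0 < t \<and> y t = 1}"
      using nonneg[OF that] by auto
    moreover have "{t. 0 < t \<and> y t = 1} \<subseteq> {t. s < t \<and> y t = 1} \<union> {0..s}"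
      by auto
    ultimately show ?thesis
      using Splus_path_time_shift[OF y, of s] Splus_path_time_shift[OF y, of 0]
      by (auto simp: ecard_eq_top_iff dest: finite_subset)
  qed
  ultimately have "{s. y s = 1 \<and> Sminus_path (time_shift s y) \<noteq> \<infinity> \<and> Splus_path (time_shift s y) = \<infinity>}
      = (if Splus_path y = \<infinity> then {s. y s = 1} else {})"
    by auto
  moreover have "infinite {s. y s = 1}" if "Splus_path y = \<infinity>"
    using that Splus_path_time_shift[OF y, of 0] by (auto simp: ecard_eq_top_iff elim: infinite_super[rotated])
  ultimately show ?thesis
    by (simp add: ecard_eq_top_iff)
qed

section \<open>Mass transport\<close>

locale point_stationary = prob_space M for M :: "'a measure" +
  fixes I :: "int \<Rightarrow> 'a \<Rightarrow> real"
  assumes measurable_I [measurable]: "\<And>t. I t \<in> borel_measurable M"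
    and AE_zero_one: "AE \<omega> in M. range (\<lambda>t. I t \<omega>) \<subseteq> {0, 1}"
    and AE_origin: "AE \<omega> in M. I 0 \<omega> = 1"
    and nn_integral_point_shift: "\<And>s F. F \<in> borel_measurable path_space \<Longrightarrow>
      (\<integral>\<^sup>+\<omega>. ennreal (I s \<omega>) * F (\<lambda>t. I t \<omega>) \<partial>M)
        = (\<integral>\<^sup>+\<omega>. ennreal (I (- s) \<omega>) * F (time_shift (- s) (\<lambda>t. I t \<omega>)) \<partial>M)"
begin

lemma point_stationary_reflect: "point_stationary M (\<lambda>t. I (- t))"
proof
  show "AE \<omega> in M. range (\<lambda>t. I (- t) \<omega>) \<subseteq> {0, 1}"
    using AE_zero_one by eventually_elim auto
  show "AE \<omega> in M. I (- 0) \<omega> = 1"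
    using AE_origin by simp
  fix s and F :: "(int \<Rightarrow> real) \<Rightarrow> ennreal"
  assume [measurable]: "F \<in> borel_measurable path_space"
  have [measurable]: "(\<lambda>y. F (\<lambda>t. y (- t))) \<in> borel_measurable path_space"
    by measurable
  from nn_integral_point_shift[of "\<lambda>y. F (\<lambda>t. y (- t))" "- s"]
  show "(\<integral>\<^sup>+\<omega>. ennreal (I (- s) \<omega>) * F (\<lambda>t. I (- t) \<omega>) \<partial>M)
      = (\<integral>\<^sup>+\<omega>. ennreal (I (- (- s)) \<omega>) * F (time_shift (- s) (\<lambda>t. I (- t) \<omega>)) \<partial>M)"
    by (simp add: time_shift_def algebra_simps)
qed (simp add: measurable_I)

lemma measurable_Splus [measurable]: "Splus I \<in> borel_measurable M"
  and measurable_Sminus [measurable]: "Sminus I \<in> borel_measurable M"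
  and measurable_Stot [measurable]: "Stot I \<in> borel_measurable M"
  unfolding Stot_def[abs_def] Splus_def[abs_def] Sminus_def[abs_def] by measurable

lemma AE_zero_one_origin: "AE \<omega> in M. range (\<lambda>t. I t \<omega>) \<subseteq> {0, 1} \<and> I 0 \<omega> = 1"
  using AE_zero_one AE_origin by eventually_elim simp

lemma mass_transport:
  fixes R :: "(int \<Rightarrow> real) \<Rightarrow> (int \<Rightarrow> real) \<Rightarrow> bool"
  assumes [measurable]: "Measurable.pred (path_space \<Otimes>\<^sub>M path_space) (\<lambda>(y, z). R y z)"
  shows "(\<integral>\<^sup>+\<omega>. ecard {s. I s \<omega> = 1 \<and> R (\<lambda>t. I t \<omega>) (time_shift s (\<lambda>t. I t \<omega>))} \<partial>M)
       = (\<integral>\<^sup>+\<omega>. ecard {s. I s \<omega> = 1 \<and> R (time_shift s (\<lambda>t. I t \<omega>)) (\<lambda>t. I t \<omega>)} \<partial>M)"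
proof -
  define F :: "int \<Rightarrow> (int \<Rightarrow> real) \<Rightarrow> ennreal" where "F s = indicator {y. R y (time_shift s y)}" for s
  have [measurable]: "F s \<in> borel_measurable path_space" for s
    unfolding F_def by measurable
  have "(\<integral>\<^sup>+\<omega>. ecard {s. I s \<omega> = 1 \<and> R (\<lambda>t. I t \<omega>) (time_shift s (\<lambda>t. I t \<omega>))} \<partial>M)
      = (\<integral>\<^sup>+\<omega>. \<integral>\<^sup>+s. ennreal (I s \<omega>) * F s (\<lambda>t. I t \<omega>) \<partial>count_space UNIV \<partial>M)"
    using AE_zero_one
    by (intro nn_integral_cong_AE, eventually_elim) (simp add: ecard_ones_eq_nn_integral F_def indicator_def)
  also have "\<dots> = (\<integral>\<^sup>+s. \<integral>\<^sup>+\<omega>. ennreal (I s \<omega>) * F s (\<lambda>t. I t \<omega>) \<partial>M \<partial>count_space UNIV)"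
    by (rule nn_integral_count_space_nn_integral) auto
  also have "\<dots> = (\<integral>\<^sup>+s. \<integral>\<^sup>+\<omega>. ennreal (I (- s) \<omega>) * F s (time_shift (- s) (\<lambda>t. I t \<omega>)) \<partial>M \<partial>count_space UNIV)"
    by (intro nn_integral_cong nn_integral_point_shift) measurable
  also have "\<dots> = (\<integral>\<^sup>+s. \<integral>\<^sup>+\<omega>. ennreal (I s \<omega>) * F (- s) (time_shift s (\<lambda>t. I t \<omega>)) \<partial>M \<partial>count_space UNIV)"
    using nn_integral_bij_count_space[of uminus UNIV UNIV
        "\<lambda>s. \<integral>\<^sup>+\<omega>. ennreal (I (- s) \<omega>) * F s (time_shift (- s) (\<lambda>t. I t \<omega>)) \<partial>M"]
    by (simp add: bij_betw_def)
  also have "\<dots> = (\<integral>\<^sup>+\<omega>. \<integral>\<^sup>+s. ennreal (I s \<omega>) * F (- s) (time_shift s (\<lambda>t. I t \<omega>)) \<partial>count_space UNIV \<partial>M)"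
    by (rule nn_integral_count_space_nn_integral[symmetric]) auto
  also have "\<dots> = (\<integral>\<^sup>+\<omega>. ecard {s. I s \<omega> = 1 \<and> R (time_shift s (\<lambda>t. I t \<omega>)) (\<lambda>t. I t \<omega>)} \<partial>M)"
    using AE_zero_one
    by (intro nn_integral_cong_AE, eventually_elim) (simp add: ecard_ones_eq_nn_integral F_def indicator_def)
  finally show ?thesis .
qed

lemma nn_integral_ecard_ones_of_rank:
  assumes "b < k"
  shows "(\<integral>\<^sup>+\<omega>. ecard {s. I s \<omega> = 1
        \<and> (Stot_path (\<lambda>t. I t \<omega>) = of_nat k \<and> Sminus_path (\<lambda>t. I t \<omega>) = of_nat a)
        \<and> (Stot_path (time_shift s (\<lambda>t. I t \<omega>)) = of_nat k
          \<and> Sminus_path (time_shift s (\<lambda>t. I t \<omega>)) = of_nat b)} \<partial>M)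
    = emeasure M {\<omega> \<in> space M. Stot I \<omega> = of_nat k \<and> Sminus I \<omega> = of_nat a}"
proof -
  have "AE \<omega> in M. ecard {s. I s \<omega> = 1
        \<and> (Stot_path (\<lambda>t. I t \<omega>) = of_nat k \<and> Sminus_path (\<lambda>t. I t \<omega>) = of_nat a)
        \<and> (Stot_path (time_shift s (\<lambda>t. I t \<omega>)) = of_nat k
          \<and> Sminus_path (time_shift s (\<lambda>t. I t \<omega>)) = of_nat b)}
      = indicator {\<omega> \<in> space M. Stot I \<omega> = of_nat k \<and> Sminus I \<omega> = of_nat a} \<omega>"
    using AE_zero_one AE_space
  proof eventually_elim
    case (elim \<omega>)
    let ?y = "\<lambda>t. I t \<omega>"
    have Stot_shift: "Stot_path (time_shift s ?y) = Stot_path ?y" for s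
      using Stot_path_time_shift[OF elim(1)] Stot_path_eq_ecard[OF elim(1)] by simp
    show ?case
    proof (cases "Stot_path ?y = of_nat k \<and> Sminus_path ?y = of_nat a")
      case True
      with elim ecard_ones_of_rank_eq_1[OF elim(1) _ \<open>b < k\<close>] show ?thesis
        by (simp add: Stot_eq_path Sminus_eq_path Stot_shift)
    next
      case False
      with elim show ?thesis
        by (auto simp: Stot_eq_path Sminus_eq_path)
    qed
  qed
  then show ?thesis
    by (simp add: nn_integral_cong_AE nn_integral_indicator)
qed

(* With R below, the origin sends unit mass to the one of rank l' when the path has k ones and the
   origin has rank l. *)
lemma emeasure_Stot_Sminus_eq:
  assumes "l < k" and "l' < k"
  shows "emeasure M {\<omega> \<in> space M. Stot I \<omega> = of_nat k \<and> Sminus I \<omega> = of_nat l}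
       = emeasure M {\<omega> \<in> space M. Stot I \<omega> = of_nat k \<and> Sminus I \<omega> = of_nat l'}"
proof -
  define R where "R y z \<longleftrightarrow> (Stot_path y = of_nat k \<and> Sminus_path y = of_nat l)
    \<and> (Stot_path z = of_nat k \<and> Sminus_path z = of_nat l')" for y z
  have "emeasure M {\<omega> \<in> space M. Stot I \<omega> = of_nat k \<and> Sminus I \<omega> = of_nat l}
      = (\<integral>\<^sup>+\<omega>. ecard {s. I s \<omega> = 1 \<and> R (\<lambda>t. I t \<omega>) (time_shift s (\<lambda>t. I t \<omega>))} \<partial>M)"
    using nn_integral_ecard_ones_of_rank[OF \<open>l' < k\<close>, of l] by (simp add: R_def)
  also have "\<dots> = (\<integral>\<^sup>+\<omega>. ecard {s. I s \<omega> = 1 \<and> R (time_shift s (\<lambda>t. I t \<omega>)) (\<lambda>t. I t \<omega>)} \<partial>M)"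
    by (rule mass_transport) (simp add: R_def)
  also have "\<dots> = emeasure M {\<omega> \<in> space M. Stot I \<omega> = of_nat k \<and> Sminus I \<omega> = of_nat l'}"
    using nn_integral_ecard_ones_of_rank[OF \<open>l < k\<close>, of l'] by (simp add: R_def conj_ac)
  finally show ?thesis .
qed

lemma nn_integral_ecard_first_one:
  "(\<integral>\<^sup>+\<omega>. ecard {s. I s \<omega> = 1
        \<and> (Sminus_path (\<lambda>t. I t \<omega>) \<noteq> \<infinity> \<and> Splus_path (\<lambda>t. I t \<omega>) = \<infinity>)
        \<and> Sminus_path (time_shift s (\<lambda>t. I t \<omega>)) = 0} \<partial>M)
    = emeasure M {\<omega> \<in> space M. Sminus I \<omega> \<noteq> \<infinity> \<and> Splus I \<omega> = \<infinity>}"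
proof -
  have "AE \<omega> in M. ecard {s. I s \<omega> = 1
        \<and> (Sminus_path (\<lambda>t. I t \<omega>) \<noteq> \<infinity> \<and> Splus_path (\<lambda>t. I t \<omega>) = \<infinity>)
        \<and> Sminus_path (time_shift s (\<lambda>t. I t \<omega>)) = 0}
      = indicator {\<omega> \<in> space M. Sminus I \<omega> \<noteq> \<infinity> \<and> Splus I \<omega> = \<infinity>} \<omega>"
    using AE_zero_one_origin AE_space
  proof eventually_elim
    case (elim \<omega>)
    show ?case
    proof (cases "Sminus_path (\<lambda>t. I t \<omega>) \<noteq> \<infinity> \<and> Splus_path (\<lambda>t. I t \<omega>) = \<infinity>")
      case True
      with elim ecard_first_one_eq_1[of "\<lambda>t. I t \<omega>"] show ?thesis
        by (simp add: Sminus_eq_path Splus_eq_path)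
    next
      case False
      with elim show ?thesis
        by (auto simp: Sminus_eq_path Splus_eq_path)
    qed
  qed
  then show ?thesis
    by (simp add: nn_integral_cong_AE nn_integral_indicator)
qed

lemma nn_integral_ecard_first_one_at_origin:
  "(\<integral>\<^sup>+\<omega>. ecard {s. I s \<omega> = 1
        \<and> (Sminus_path (time_shift s (\<lambda>t. I t \<omega>)) \<noteq> \<infinity> \<and> Splus_path (time_shift s (\<lambda>t. I t \<omega>)) = \<infinity>)
        \<and> Sminus_path (\<lambda>t. I t \<omega>) = 0} \<partial>M)
    = \<infinity> * emeasure M {\<omega> \<in> space M. Sminus I \<omega> = 0 \<and> Splus I \<omega> = \<infinity>}"
proof -
  have "AE \<omega> in M. ecard {s. I s \<omega> = 1
        \<and> (Sminus_path (time_shift s (\<lambda>t. I t \<omega>)) \<noteq> \<infinity> \<and> Splus_path (time_shift s (\<lambda>t. I t \<omega>)) = \<infinity>)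
        \<and> Sminus_path (\<lambda>t. I t \<omega>) = 0}
      = \<infinity> * indicator {\<omega> \<in> space M. Sminus I \<omega> = 0 \<and> Splus I \<omega> = \<infinity>} \<omega>"
    using AE_zero_one AE_space
  proof eventually_elim
    case (elim \<omega>)
    show ?case
    proof (cases "Sminus_path (\<lambda>t. I t \<omega>) = 0")
      case True
      with elim ecard_ones_finite_left_infinite_right[of "\<lambda>t. I t \<omega>"] show ?thesis
        by (simp add: Sminus_eq_path Splus_eq_path)
    next
      case False
      with elim show ?thesis
        by (simp add: Sminus_eq_path)
    qed
  qed
  then show ?thesis
    by (simp add: nn_integral_cong_AE nn_integral_cmult_indicator)
qed

(* With R below, the origin sends unit mass to the first one of a path with finitely many ones on the
   left and infinitely many on the right; it receives mass only when it is itself the first one, and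
   then from infinitely many ones. *)
lemma emeasure_Sminus_finite_Splus_infinite:
  "emeasure M {\<omega> \<in> space M. Sminus I \<omega> \<noteq> \<infinity> \<and> Splus I \<omega> = \<infinity>} = 0"
proof -
  define R where "R y z \<longleftrightarrow> (Sminus_path y \<noteq> \<infinity> \<and> Splus_path y = \<infinity>) \<and> Sminus_path z = 0" for y z
  have "(\<integral>\<^sup>+\<omega>. ecard {s. I s \<omega> = 1 \<and> R (\<lambda>t. I t \<omega>) (time_shift s (\<lambda>t. I t \<omega>))} \<partial>M)
      = (\<integral>\<^sup>+\<omega>. ecard {s. I s \<omega> = 1 \<and> R (time_shift s (\<lambda>t. I t \<omega>)) (\<lambda>t. I t \<omega>)} \<partial>M)"
    by (rule mass_transport) (simp add: R_def)
  then have "emeasure M {\<omega> \<in> space M. Sminus I \<omega> \<noteq> \<infinity> \<and> Splus I \<omega> = \<infinity>}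
      = \<infinity> * emeasure M {\<omega> \<in> space M. Sminus I \<omega> = 0 \<and> Splus I \<omega> = \<infinity>}"
    by (simp only: R_def nn_integral_ecard_first_one nn_integral_ecard_first_one_at_origin)
  moreover have "emeasure M {\<omega> \<in> space M. Sminus I \<omega> \<noteq> \<infinity> \<and> Splus I \<omega> = \<infinity>} \<noteq> \<infinity>"
    by simp
  ultimately show ?thesis
    by (auto simp: ennreal_top_mult split: if_splits)
qed

lemma AE_Sminus_infinite_iff_Splus_infinite: "AE \<omega> in M. Sminus I \<omega> = \<infinity> \<longleftrightarrow> Splus I \<omega> = \<infinity>"
proof -
  have "AE \<omega> in M. \<not> (Sminus X \<omega> \<noteq> \<infinity> \<and> Splus X \<omega> = \<infinity>)" if "point_stationary M X" for X
    using point_stationary.emeasure_Sminus_finite_Splus_infinite[OF that]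
      point_stationary.measurable_Sminus[OF that] point_stationary.measurable_Splus[OF that]
    by (subst AE_iff_measurable[OF _ refl]) auto
  from this[OF point_stationary_axioms] this[OF point_stationary_reflect]
  show ?thesis
    by eventually_elim (auto simp: Sminus_reflect Splus_reflect)
qed

lemma AE_Stot_of_nat_imp_Sminus_less:
  "AE \<omega> in M. Stot I \<omega> = of_nat k \<longrightarrow> (\<exists>l<k. Sminus I \<omega> = of_nat l)"
  using AE_zero_one_origin
proof eventually_elim
  case (elim \<omega>)
  then show ?case
    using Sminus_path_less_Stot_path[of "\<lambda>t. I t \<omega>" k] by (simp add: Stot_eq_path Sminus_eq_path)
qed

lemma measure_Stot_Sminus:
  assumes "l < k"
  shows "measure M {\<omega> \<in> space M. Stot I \<omega> = of_nat k \<and> Sminus I \<omega> = of_nat l}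
       = measure M {\<omega> \<in> space M. Stot I \<omega> = of_nat k} / real k"
proof -
  define E where "E l = {\<omega> \<in> space M. Stot I \<omega> = of_nat k \<and> Sminus I \<omega> = of_nat l}" for l
  have [measurable]: "E l \<in> sets M" for l
    unfolding E_def by measurable
  have "AE \<omega> in M. \<omega> \<in> {\<omega> \<in> space M. Stot I \<omega> = of_nat k} \<longleftrightarrow> \<omega> \<in> (\<Union>l<k. E l)"
    using AE_Stot_of_nat_imp_Sminus_less[of k] by eventually_elim (auto simp: E_def)
  then have "measure M {\<omega> \<in> space M. Stot I \<omega> = of_nat k} = measure M (\<Union>l<k. E l)"
    by (intro measure_eq_AE) auto
  also have "\<dots> = (\<Sum>l<k. measure M (E l))"
    by (intro measure_finite_Union) (auto simp: disjoint_family_on_def E_def)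
  also have "\<dots> = (\<Sum>l'<k. measure M (E l))"
    using emeasure_Stot_Sminus_eq[OF _ \<open>l < k\<close>] by (intro sum.cong) (auto simp: measure_def E_def)
  finally show ?thesis
    using \<open>l < k\<close> by (simp add: E_def)
qed

lemma emeasure_Stot_Sminus:
  "emeasure M {\<omega> \<in> space M. Stot I \<omega> = of_nat k \<and> Sminus I \<omega> = of_nat m}
    = ennreal (if m < k then measure M {\<omega> \<in> space M. Stot I \<omega> = of_nat k} / real k else 0)"
proof (cases "m < k")
  case True
  then show ?thesis
    by (simp add: emeasure_eq_measure measure_Stot_Sminus)
next
  case False
  have "AE \<omega> in M. \<not> (Stot I \<omega> = of_nat k \<and> Sminus I \<omega> = of_nat m)"
    using AE_Stot_of_nat_imp_Sminus_less[of k] by eventually_elim (use False in auto)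
  with False show ?thesis
    by (simp add: emeasure_eq_0_AE)
qed

lemma emeasure_Sminus_eq_suminf:
  "emeasure M {\<omega> \<in> space M. Sminus I \<omega> = of_nat m}
    = (\<Sum>k. emeasure M {\<omega> \<in> space M. Stot I \<omega> = of_nat k \<and> Sminus I \<omega> = of_nat m})"
proof -
  define E where "E k = {\<omega> \<in> space M. Stot I \<omega> = of_nat k \<and> Sminus I \<omega> = of_nat m}" for k :: nat
  have [measurable]: "E k \<in> sets M" for k
    unfolding E_def by measurable
  have "AE \<omega> in M. \<omega> \<in> {\<omega> \<in> space M. Sminus I \<omega> = of_nat m} \<longleftrightarrow> \<omega> \<in> (\<Union>k. E k)"
    using AE_zero_one_origin AE_Sminus_infinite_iff_Splus_infinite
  proof eventually_elim
    case (elim \<omega>)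
    let ?y = "\<lambda>t. I t \<omega>"
    have "Splus_path ?y = of_nat (card {t. 0 < t \<and> I t \<omega> = 1})" if "Sminus I \<omega> = of_nat m"
      using that elim Splus_path_eq_ecard[of ?y] ecard_eq_top_iff[of "{t. 0 < t \<and> I t \<omega> = 1}"]
      by (auto simp: Splus_eq_path)
    then show ?case
      using elim by (auto simp: E_def Stot_eq_path Sminus_eq_path Stot_path_eq
          intro!: exI[of _ "m + 1 + card {t. 0 < t \<and> I t \<omega> = 1}"])
  qed
  then have "emeasure M {\<omega> \<in> space M. Sminus I \<omega> = of_nat m} = emeasure M (\<Union>k. E k)"
    by (intro emeasure_eq_AE) auto
  also have "\<dots> = (\<Sum>k. emeasure M (E k))"
    by (intro suminf_emeasure[symmetric]) (auto simp: disjoint_family_on_def E_def)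
  finally show ?thesis
    by (simp add: E_def)
qed

lemma measure_Sminus_eq_Suc:
  "measure M {\<omega> \<in> space M. Sminus I \<omega> = of_nat m}
    = measure M {\<omega> \<in> space M. Stot I \<omega> = of_nat (Suc m)} / real (Suc m)
      + measure M {\<omega> \<in> space M. Sminus I \<omega> = of_nat (Suc m)}"
proof -
  let ?q = "\<lambda>k. measure M {\<omega> \<in> space M. Stot I \<omega> = of_nat k} / real k"
  have "emeasure M {\<omega> \<in> space M. Stot I \<omega> = of_nat k \<and> Sminus I \<omega> = of_nat m}
      = ennreal (if k = Suc m then ?q k else 0)
        + emeasure M {\<omega> \<in> space M. Stot I \<omega> = of_nat k \<and> Sminus I \<omega> = of_nat (Suc m)}" for k
    using emeasure_Stot_Sminus[of k m] emeasure_Stot_Sminus[of k "Suc m"] by auto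
  then have "emeasure M {\<omega> \<in> space M. Sminus I \<omega> = of_nat m}
      = (\<Sum>k. ennreal (if k = Suc m then ?q k else 0))
        + emeasure M {\<omega> \<in> space M. Sminus I \<omega> = of_nat (Suc m)}"
    by (simp add: emeasure_Sminus_eq_suminf[of m] emeasure_Sminus_eq_suminf[of "Suc m"] suminf_add
        del: of_nat_Suc)
  also have "(\<Sum>k. ennreal (if k = Suc m then ?q k else 0)) = ennreal (?q (Suc m))"
    by (subst suminf_finite[of "{Suc m}"]) auto
  finally show ?thesis
    by (simp add: emeasure_eq_measure flip: ennreal_plus)
qed

lemma AE_Sminus_of_nat_or_infinite: "AE \<omega> in M. Sminus I \<omega> \<in> range of_nat \<union> {\<infinity>}"
  using AE_zero_one
proof eventually_elim
  case (elim \<omega>)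
  then show ?case
    by (simp add: Sminus_eq_path Sminus_path_eq_ecard emeasure_count_space)
qed

lemma AE_Stot_infinite_iff_Sminus_infinite: "AE \<omega> in M. Stot I \<omega> = \<infinity> \<longleftrightarrow> Sminus I \<omega> = \<infinity>"
  using AE_origin AE_Sminus_infinite_iff_Splus_infinite
  by eventually_elim (auto simp: Stot_def ennreal_add_eq_top)

lemma measure_Stot_eq_Sminus_diff:
  assumes "1 \<le> k"
  shows "measure M {\<omega> \<in> space M. Stot I \<omega> = of_nat k}
    = real k * (measure M {\<omega> \<in> space M. Sminus I \<omega> = of_nat (k - 1)}
                - measure M {\<omega> \<in> space M. Sminus I \<omega> = of_nat k})"
proof -
  obtain m where "k = Suc m"
    using assms by (cases k) auto
  then show ?thesis
    using measure_Sminus_eq_Suc[of m] by (simp del: of_nat_Suc)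
qed

lemma cond_prob_Sminus_given_Stot:
  assumes "l < k" and "0 < measure M {\<omega> \<in> space M. Stot I \<omega> = of_nat k}"
  shows "cond_prob_ev M {\<omega> \<in> space M. Sminus I \<omega> = of_nat l} {\<omega> \<in> space M. Stot I \<omega> = of_nat k}
    = 1 / real k"
proof -
  have "{\<omega> \<in> space M. Sminus I \<omega> = of_nat l} \<inter> {\<omega> \<in> space M. Stot I \<omega> = of_nat k}
      = {\<omega> \<in> space M. Stot I \<omega> = of_nat k \<and> Sminus I \<omega> = of_nat l}"
    by auto
  then show ?thesis
    using measure_Stot_Sminus[OF assms(1)] assms(2) by (simp add: cond_prob_ev_def)
qed

lemma cond_prob_Sminus_given_Stot_infinite:
  assumes "0 < measure M {\<omega> \<in> space M. Stot I \<omega> = \<infinity>}"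
  shows "cond_prob_ev M {\<omega> \<in> space M. Sminus I \<omega> = \<infinity>} {\<omega> \<in> space M. Stot I \<omega> = \<infinity>} = 1"
proof -
  have "measure M ({\<omega> \<in> space M. Sminus I \<omega> = \<infinity>} \<inter> {\<omega> \<in> space M. Stot I \<omega> = \<infinity>})
      = measure M {\<omega> \<in> space M. Stot I \<omega> = \<infinity>}"
    using AE_Stot_infinite_iff_Sminus_infinite by (intro measure_eq_AE) auto
  with assms show ?thesis
    by (simp add: cond_prob_ev_def)
qed

lemma measure_Stot_eq_Splus_diff:
  assumes "1 \<le> k"
  shows "measure M {\<omega> \<in> space M. Stot I \<omega> = of_nat k}
    = real k * (measure M {\<omega> \<in> space M. Splus I \<omega> = of_nat (k - 1)}
                - measure M {\<omega> \<in> space M. Splus I \<omega> = of_nat k})"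
  using point_stationary.measure_Stot_eq_Sminus_diff[OF point_stationary_reflect assms]
  by (simp add: Sminus_reflect Stot_reflect)

lemma cond_prob_Splus_given_Stot:
  assumes "l < k" and "0 < measure M {\<omega> \<in> space M. Stot I \<omega> = of_nat k}"
  shows "cond_prob_ev M {\<omega> \<in> space M. Splus I \<omega> = of_nat l} {\<omega> \<in> space M. Stot I \<omega> = of_nat k}
    = 1 / real k"
  using point_stationary.cond_prob_Sminus_given_Stot[OF point_stationary_reflect] assms
  by (simp add: Sminus_reflect Stot_reflect)

lemma cond_prob_Splus_given_Stot_infinite:
  assumes "0 < measure M {\<omega> \<in> space M. Stot I \<omega> = \<infinity>}"
  shows "cond_prob_ev M {\<omega> \<in> space M. Splus I \<omega> = \<infinity>} {\<omega> \<in> space M. Stot I \<omega> = \<infinity>} = 1"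
  using point_stationary.cond_prob_Sminus_given_Stot_infinite[OF point_stationary_reflect] assms
  by (simp add: Sminus_reflect Stot_reflect)

lemma measure_Splus_eq_Sminus:
  "measure M {\<omega> \<in> space M. Splus I \<omega> = x} = measure M {\<omega> \<in> space M. Sminus I \<omega> = x}"
proof -
  consider "x = \<infinity>" | m where "x = of_nat m" | "x \<notin> range of_nat \<union> {\<infinity>}"
    by blast
  then show ?thesis
  proof cases
    case 1
    then show ?thesis
      using AE_Sminus_infinite_iff_Splus_infinite by (intro measure_eq_AE) auto
  next
    case 2
    have "emeasure M {\<omega> \<in> space M. Splus I \<omega> = of_nat m}
        = (\<Sum>k. emeasure M {\<omega> \<in> space M. Stot I \<omega> = of_nat k \<and> Splus I \<omega> = of_nat m})"
      using point_stationary.emeasure_Sminus_eq_suminf[OF point_stationary_reflect]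
      by (simp add: Sminus_reflect Stot_reflect)
    also have "\<dots> = (\<Sum>k. emeasure M {\<omega> \<in> space M. Stot I \<omega> = of_nat k \<and> Sminus I \<omega> = of_nat m})"
      using point_stationary.emeasure_Stot_Sminus[OF point_stationary_reflect]
      by (simp add: Sminus_reflect Stot_reflect emeasure_Stot_Sminus cong: if_cong)
    also have "\<dots> = emeasure M {\<omega> \<in> space M. Sminus I \<omega> = of_nat m}"
      by (simp add: emeasure_Sminus_eq_suminf)
    finally show ?thesis
      using 2 by (simp add: measure_def)
  next
    case 3
    have "AE \<omega> in M. Splus I \<omega> \<noteq> x \<and> Sminus I \<omega> \<noteq> x"
      using AE_Sminus_of_nat_or_infinite
        point_stationary.AE_Sminus_of_nat_or_infinite[OF point_stationary_reflect]
      by eventually_elim (use 3 in \<open>auto simp: Sminus_reflect\<close>)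
    then have "emeasure M {\<omega> \<in> space M. Splus I \<omega> = x} = 0"
      and "emeasure M {\<omega> \<in> space M. Sminus I \<omega> = x} = 0"
      by (auto intro!: emeasure_eq_0_AE elim: eventually_mono)
    then show ?thesis
      by (simp add: measure_def)
  qed
qed

end

section \<open>The limit process is point-stationary\<close>

(* A continuous function agreeing with indicator B on {0, 1}. On 0-1 paths it turns the indicators of
   cylinder sets into bounded continuous functionals, to which the convergence hypothesis applies. *)
definition soft_indicator :: "real set \<Rightarrow> real \<Rightarrow> real" where
  "soft_indicator B x = indicator B 0 * (1 - max 0 (min 1 x)) + indicator B 1 * max 0 (min 1 x)"

lemma continuous_on_soft_indicator [continuous_intros]:
  "continuous_on S f \<Longrightarrow> continuous_on S (\<lambda>x. soft_indicator B (f x))"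
  unfolding soft_indicator_def by (intro continuous_intros)

lemma measurable_soft_indicator [measurable]: "soft_indicator B \<in> borel_measurable borel"
  unfolding soft_indicator_def[abs_def] by measurable

lemma soft_indicator_nonneg: "0 \<le> soft_indicator B x"
  and soft_indicator_le_1: "soft_indicator B x \<le> 1"
  by (auto simp: soft_indicator_def indicator_def)

lemma soft_indicator_zero_one: "x \<in> {0, 1} \<Longrightarrow> soft_indicator B x = indicator B x"
  by (auto simp: soft_indicator_def indicator_def)

lemma prod_soft_indicator_bounds:
  "0 \<le> (\<Prod>j\<in>J. soft_indicator (A j) (x j))" "(\<Prod>j\<in>J. soft_indicator (A j) (x j)) \<le> 1"
  by (simp_all add: prod_nonneg prod_le_1 soft_indicator_nonneg soft_indicator_le_1)

lemma bounded_range_soft_indicator_mult: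
  assumes "bounded (range g)"
  shows "bounded (range (\<lambda>x. soft_indicator B (x r) * g (f x)))"
proof -
  obtain C where C: "\<And>x. \<bar>g x\<bar> \<le> C"
    using assms by (auto simp: bounded_iff)
  have "\<bar>soft_indicator B a * b\<bar> \<le> C" if "\<bar>b\<bar> \<le> C" for a b
    using that soft_indicator_nonneg[of B a] soft_indicator_le_1[of B a]
    by (simp add: abs_mult) (metis abs_ge_zero mult_left_le_one_le order.trans)
  with C show ?thesis
    by (auto intro!: boundedI[where B=C])
qed

lemma (in finite_measure) emeasure_distr_density_cylinder:
  fixes X :: "int \<Rightarrow> 'a \<Rightarrow> real"
  assumes [measurable]: "\<And>t. X t \<in> borel_measurable M"
    and X: "AE \<omega> in M. range (\<lambda>t. X t \<omega>) \<subseteq> {0, 1}"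
    and J: "finite J" and A: "\<And>j. j \<in> J \<Longrightarrow> A j \<in> sets borel"
  shows "emeasure (distr (density M (\<lambda>\<omega>. ennreal (X r \<omega>))) path_space (\<lambda>\<omega> t. X t \<omega>))
      (prod_emb UNIV (\<lambda>_. borel) J (Pi\<^sub>E J A))
    = ennreal (\<integral>\<omega>. soft_indicator {1} (X r \<omega>) * (\<Prod>j\<in>J. soft_indicator (A j) (X j \<omega>)) \<partial>M)"
proof -
  let ?C = "prod_emb UNIV (\<lambda>_. borel) J (Pi\<^sub>E J A)"
  let ?B = "{\<omega> \<in> space M. \<forall>j\<in>J. X j \<omega> \<in> A j}"
  have C: "?C \<in> sets path_space"
    using J A by (intro sets_PiM_I) auto
  have B: "(\<lambda>\<omega> t. X t \<omega>) -` ?C \<inter> space M = ?B"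
    by (auto simp: prod_emb_iff)
  have [measurable]: "?B \<in> sets M"
    unfolding B[symmetric] using C by measurable
  have "AE \<omega> in M. ennreal (X r \<omega>) * indicator ?B \<omega>
      = ennreal (soft_indicator {1} (X r \<omega>) * (\<Prod>j\<in>J. soft_indicator (A j) (X j \<omega>)))"
    using X AE_space
  proof eventually_elim
    case (elim \<omega>)
    then have X01: "X t \<omega> \<in> {0, 1}" for t
      by auto
    have "(\<Prod>j\<in>J. soft_indicator (A j) (X j \<omega>)) = indicator ?B \<omega>"
      using J elim(2) by (auto simp: soft_indicator_zero_one[OF X01] indicator_def prod_zero_iff)
    moreover have "soft_indicator {1} (X r \<omega>) = X r \<omega>"
      using X01[of r] by (auto simp: soft_indicator_zero_one)
    ultimately show ?case
      by (simp add: indicator_def)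
  qed
  then have "emeasure (distr (density M (\<lambda>\<omega>. ennreal (X r \<omega>))) path_space (\<lambda>\<omega> t. X t \<omega>)) ?C
      = (\<integral>\<^sup>+\<omega>. ennreal (soft_indicator {1} (X r \<omega>) * (\<Prod>j\<in>J. soft_indicator (A j) (X j \<omega>))) \<partial>M)"
    using C by (simp add: emeasure_distr emeasure_density B nn_integral_cong_AE)
  also have "\<dots> = ennreal (\<integral>\<omega>. soft_indicator {1} (X r \<omega>) * (\<Prod>j\<in>J. soft_indicator (A j) (X j \<omega>)) \<partial>M)"
    by (intro nn_integral_eq_integral integrable_const_bound[where B=1] AE_I2)
      (auto simp: abs_mult soft_indicator_nonneg soft_indicator_le_1 prod_soft_indicator_bounds mult_le_one)
  finally show ?thesis .
qed

lemma measurable_window: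
  assumes "\<And>t. X t \<in> borel_measurable N"
  shows "window u v X \<in> borel_measurable N"
proof (rule measurable_coordinatewise_then_product)
  fix t
  have "(\<lambda>\<omega>. window u v X \<omega> t) = (if t \<in> {- int u..int v} then X t else (\<lambda>_. 0))"
    by (cases "t \<in> {- int u..int v}") (auto simp: window_def)
  then show "(\<lambda>\<omega>. window u v X \<omega> t) \<in> borel_measurable N"
    by (simp add: assms)
qed

lemma borel_measurable_path_space_continuous:
  "continuous_on UNIV f \<Longrightarrow> f \<in> borel_measurable path_space"
  using borel_measurable_continuous_onI measurable_cong_sets[OF sets_PiM_equal_borel refl] by blast

lemma continuous_on_time_shift: "continuous_on UNIV (time_shift s :: (int \<Rightarrow> real) \<Rightarrow> _)"
  unfolding time_shift_def by (intro continuous_on_coordinatewise_then_product continuous_on_product_coordinates)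

lemma integral_stationary_shift:
  fixes F :: "(int \<Rightarrow> real) \<Rightarrow> real"
  assumes "stationary N X" and "\<And>t. X t \<in> borel_measurable N" and F: "F \<in> borel_measurable path_space"
  shows "(\<integral>\<omega>. F (time_shift h (\<lambda>t. X t \<omega>)) \<partial>N) = (\<integral>\<omega>. F (\<lambda>t. X t \<omega>) \<partial>N)"
proof -
  have shifted: "(\<lambda>\<omega> t. X (t + h) \<omega>) \<in> measurable N path_space"
    and path: "(\<lambda>\<omega> t. X t \<omega>) \<in> measurable N path_space"
    using assms(2) by (auto intro!: measurable_PiM_single' simp: space_PiM)
  have "(\<integral>\<omega>. F (\<lambda>t. X (t + h) \<omega>) \<partial>N) = (\<integral>y. F y \<partial>distr N path_space (\<lambda>\<omega> t. X (t + h) \<omega>))"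
    by (rule integral_distr[OF shifted F, symmetric])
  also have "\<dots> = (\<integral>y. F y \<partial>distr N path_space (\<lambda>\<omega> t. X t \<omega>))"
    using assms(1) by (simp add: stationary_def)
  also have "\<dots> = (\<integral>\<omega>. F (\<lambda>t. X t \<omega>) \<partial>N)"
    by (rule integral_distr[OF path F])
  finally show ?thesis
    by (simp add: time_shift_def)
qed

lemma local_functional_time_shift_window:
  fixes g :: "(int \<Rightarrow> real) \<Rightarrow> real"
  assumes local: "\<And>x. g (\<lambda>t. if t \<in> {- int u..int u} then x t else 0) = g x"
    and U: "int u + \<bar>h\<bar> \<le> int U"
  shows "g (time_shift h (window U U X \<omega>)) = g (time_shift h (\<lambda>t. X t \<omega>))"
proof -
  have "(\<lambda>t. if t \<in> {- int u..int u} then time_shift h (window U U X \<omega>) t else 0)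
      = (\<lambda>t. if t \<in> {- int u..int u} then time_shift h (\<lambda>t. X t \<omega>) t else 0)"
    using U abs_ge_self[of h] abs_ge_minus_self[of h] by (auto simp: time_shift_def window_def fun_eq_iff)
  then show ?thesis
    by (metis local)
qed

(* Only the unnormalised conditional expectations enter the argument. *)
locale palm_limit = prob_space M for M :: "'a measure" +
  fixes I :: "int \<Rightarrow> 'a \<Rightarrow> real"
    and Mn :: "nat \<Rightarrow> 'b measure" and In :: "nat \<Rightarrow> int \<Rightarrow> 'b \<Rightarrow> real"
  assumes measurable_I [measurable]: "\<And>t. I t \<in> borel_measurable M"
    and measurable_In: "\<And>n t. n \<ge> 1 \<Longrightarrow> In n t \<in> borel_measurable (Mn n)"
    and In_zero_one: "\<And>n t \<omega>. n \<ge> 1 \<Longrightarrow> \<omega> \<in> space (Mn n) \<Longrightarrow> In n t \<omega> \<in> {0, 1}"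
    and stationary_In: "\<And>n. n \<ge> 1 \<Longrightarrow> stationary (Mn n) (In n)"
    and tendsto_cond_exp: "\<And>u v (g :: (int \<Rightarrow> real) \<Rightarrow> real). u \<ge> 1 \<Longrightarrow> v \<ge> 1 \<Longrightarrow>
      continuous_on UNIV g \<Longrightarrow> bounded (range g) \<Longrightarrow>
      (\<lambda>n. cond_exp_ev (Mn n) {\<omega> \<in> space (Mn n). In n 0 \<omega> = 1} (\<lambda>\<omega>. g (window u v (In n) \<omega>)))
        \<longlonglongrightarrow> (\<integral>\<omega>. g (window u v I \<omega>) \<partial>M)"
begin

lemma integral_window_eqI:
  fixes g h :: "(int \<Rightarrow> real) \<Rightarrow> real"
  assumes u: "1 \<le> u"
    and g: "continuous_on UNIV g" "bounded (range g)"
    and h: "continuous_on UNIV h" "bounded (range h)"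
    and prelimit: "\<And>n. 1 \<le> n \<Longrightarrow>
      (\<integral>\<omega>. indicator {\<omega> \<in> space (Mn n). In n 0 \<omega> = 1} \<omega> * g (window u u (In n) \<omega>) \<partial>Mn n)
        = (\<integral>\<omega>. indicator {\<omega> \<in> space (Mn n). In n 0 \<omega> = 1} \<omega> * h (window u u (In n) \<omega>) \<partial>Mn n)"
  shows "(\<integral>\<omega>. g (window u u I \<omega>) \<partial>M) = (\<integral>\<omega>. h (window u u I \<omega>) \<partial>M)"
proof -
  let ?E = "\<lambda>f n. cond_exp_ev (Mn n) {\<omega> \<in> space (Mn n). In n 0 \<omega> = 1} (\<lambda>\<omega>. f (window u u (In n) \<omega>))"
  have "\<forall>\<^sub>F n in sequentially. ?E h n = ?E g n"
    unfolding eventually_sequentially cond_exp_ev_def using prelimit by (intro exI[of _ 1]) simp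
  moreover have "?E h \<longlonglongrightarrow> (\<integral>\<omega>. h (window u u I \<omega>) \<partial>M)"
    using u h by (intro tendsto_cond_exp) auto
  ultimately have "?E g \<longlonglongrightarrow> (\<integral>\<omega>. h (window u u I \<omega>) \<partial>M)"
    by (rule Lim_transform_eventually[rotated])
  moreover have "?E g \<longlonglongrightarrow> (\<integral>\<omega>. g (window u u I \<omega>) \<partial>M)"
    using u g by (intro tendsto_cond_exp) auto
  ultimately show ?thesis
    using LIMSEQ_unique by blast
qed

lemma AE_window_eq_0:
  fixes g :: "(int \<Rightarrow> real) \<Rightarrow> real"
  assumes g: "continuous_on UNIV g" and bounds: "\<And>x. 0 \<le> g x" "\<And>x. g x \<le> 1" and u: "1 \<le> u"
    and vanish: "\<And>n \<omega>. 1 \<le> n \<Longrightarrow> \<omega> \<in> space (Mn n) \<Longrightarrow> In n 0 \<omega> = 1 \<Longrightarrow> g (window u u (In n) \<omega>) = 0"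
  shows "AE \<omega> in M. g (window u u I \<omega>) = 0"
proof -
  have bounded: "bounded (range g)"
    using bounds by (intro boundedI[where B=1]) auto
  have [measurable]: "(\<lambda>\<omega>. g (window u u I \<omega>)) \<in> borel_measurable M"
    using g measurable_window[OF measurable_I] by (rule borel_measurable_continuous_on)
  have "(\<integral>\<omega>. g (window u u I \<omega>) \<partial>M) = (\<integral>\<omega>. (\<lambda>_. 0) (window u u I \<omega>) \<partial>M)"
    using u g bounded
  proof (rule integral_window_eqI)
    show "(\<integral>\<omega>. indicator {\<omega> \<in> space (Mn n). In n 0 \<omega> = 1} \<omega> * g (window u u (In n) \<omega>) \<partial>Mn n)
        = (\<integral>\<omega>. indicator {\<omega> \<in> space (Mn n). In n 0 \<omega> = 1} \<omega> * 0 \<partial>Mn n)" if "1 \<le> n" for n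
      using vanish[OF that] by (intro Bochner_Integration.integral_cong) (auto simp: indicator_def)
  qed auto
  moreover have "integrable M (\<lambda>\<omega>. g (window u u I \<omega>))"
    using bounds by (intro integrable_const_bound[where B=1]) auto
  ultimately show ?thesis
    using bounds by (simp add: integral_nonneg_eq_0_iff_AE)
qed

lemma AE_zero_one_limit: "AE \<omega> in M. range (\<lambda>t. I t \<omega>) \<subseteq> {0, 1}"
proof -
  have "AE \<omega> in M. I t \<omega> \<in> {0, 1}" for t
  proof -
    define u where "u = nat \<bar>t\<bar> + 1"
    have "t \<in> {- int u..int u}"
      unfolding u_def by (cases "0 \<le> t") auto
    then have window: "window u u X \<omega> t = X t \<omega>" for X :: "int \<Rightarrow> 'c \<Rightarrow> real" and \<omega>
      by (simp add: window_def)
    define g :: "(int \<Rightarrow> real) \<Rightarrow> real" where "g x = min 1 \<bar>x t * (1 - x t)\<bar>" for x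
    have "continuous_on UNIV g"
      unfolding g_def by (intro continuous_intros continuous_on_product_coordinates)
    moreover have "g (window u u (In n) \<omega>) = 0" if "1 \<le> n" "\<omega> \<in> space (Mn n)" for n \<omega>
      using In_zero_one[OF that, of t] by (auto simp: g_def window)
    ultimately have "AE \<omega> in M. g (window u u I \<omega>) = 0"
      by (intro AE_window_eq_0) (auto simp: g_def u_def)
    then show ?thesis
      by eventually_elim (auto simp: g_def window min_def split: if_splits)
  qed
  then show ?thesis
    by (simp add: AE_all_countable image_subset_iff)
qed

lemma AE_origin_limit: "AE \<omega> in M. I 0 \<omega> = 1"
proof -
  have window: "window 1 1 X \<omega> 0 = X 0 \<omega>" for X :: "int \<Rightarrow> 'c \<Rightarrow> real" and \<omega>
    by (simp add: window_def)
  define g :: "(int \<Rightarrow> real) \<Rightarrow> real" where "g x = min 1 \<bar>1 - x 0\<bar>" for x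
  have "continuous_on UNIV g"
    unfolding g_def by (intro continuous_intros continuous_on_product_coordinates)
  then have "AE \<omega> in M. g (window 1 1 I \<omega>) = 0"
    by (rule AE_window_eq_0) (auto simp: g_def window_def)
  then show ?thesis
    by eventually_elim (auto simp: g_def window_def min_def split: if_splits)
qed

lemma integral_point_shift_prelimit:
  fixes G :: "(int \<Rightarrow> real) \<Rightarrow> real"
  assumes n: "1 \<le> n" and G: "G \<in> borel_measurable path_space"
  shows "(\<integral>\<omega>. soft_indicator {1} (In n 0 \<omega>) * (soft_indicator {1} (In n s \<omega>) * G (\<lambda>t. In n t \<omega>)) \<partial>Mn n)
    = (\<integral>\<omega>. soft_indicator {1} (In n 0 \<omega>)
        * (soft_indicator {1} (In n (- s) \<omega>) * G (time_shift (- s) (\<lambda>t. In n t \<omega>))) \<partial>Mn n)"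
proof -
  define F where "F y = soft_indicator {1} (y 0) * (soft_indicator {1} (y s) * G y)" for y :: "int \<Rightarrow> real"
  have "F \<in> borel_measurable path_space"
    unfolding F_def using G by measurable
  from integral_stationary_shift[OF stationary_In[OF n] measurable_In[OF n] this, of "- s"]
  show ?thesis
    by (simp add: F_def time_shift_def ac_simps)
qed

lemma integral_point_shift:
  fixes g :: "(int \<Rightarrow> real) \<Rightarrow> real"
  assumes g: "continuous_on UNIV g" "bounded (range g)"
    and local: "\<And>x. g (\<lambda>t. if t \<in> {- int u..int u} then x t else 0) = g x"
  shows "(\<integral>\<omega>. soft_indicator {1} (I s \<omega>) * g (\<lambda>t. I t \<omega>) \<partial>M)
       = (\<integral>\<omega>. soft_indicator {1} (I (- s) \<omega>) * g (time_shift (- s) (\<lambda>t. I t \<omega>)) \<partial>M)"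
proof -
  define U where "U = u + nat \<bar>s\<bar> + 1"
  define g1 where "g1 x = soft_indicator {1} (x s) * g x" for x :: "int \<Rightarrow> real"
  define g2 where "g2 x = soft_indicator {1} (x (- s)) * g (time_shift (- s) x)" for x :: "int \<Rightarrow> real"
  have U: "int u + \<bar>0\<bar> \<le> int U" "int u + \<bar>- s\<bar> \<le> int U"
    by (simp_all add: U_def)
  have window: "g1 (window U U X \<omega>) = soft_indicator {1} (X s \<omega>) * g (\<lambda>t. X t \<omega>)"
    "g2 (window U U X \<omega>) = soft_indicator {1} (X (- s) \<omega>) * g (time_shift (- s) (\<lambda>t. X t \<omega>))"
    for X :: "int \<Rightarrow> 'c \<Rightarrow> real" and \<omega>
    using local_functional_time_shift_window[where g=g, OF local U(1), of X \<omega>]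
      local_functional_time_shift_window[where g=g, OF local U(2), of X \<omega>]
    by (auto simp: g1_def g2_def window_def U_def)
  have bounded: "bounded (range g1)" "bounded (range g2)"
    unfolding g1_def g2_def
    using bounded_range_soft_indicator_mult[where g=g and f="\<lambda>x. x", OF g(2)]
      bounded_range_soft_indicator_mult[where g=g and f="time_shift (- s)", OF g(2)]
    by simp_all
  have continuous: "continuous_on UNIV g1" "continuous_on UNIV g2"
    unfolding g1_def g2_def
    by (intro continuous_intros continuous_on_product_coordinates g
        continuous_on_compose2[OF g(1) continuous_on_time_shift]; simp)+
  have "(\<integral>\<omega>. g1 (window U U I \<omega>) \<partial>M) = (\<integral>\<omega>. g2 (window U U I \<omega>) \<partial>M)"
  proof (rule integral_window_eqI)
    fix n :: nat
    assume n: "1 \<le> n"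
    have "indicator {\<omega> \<in> space (Mn n). In n 0 \<omega> = 1} \<omega> = soft_indicator {1} (In n 0 \<omega>)"
      if "\<omega> \<in> space (Mn n)" for \<omega>
      using In_zero_one[OF n that, of 0] that by (auto simp: soft_indicator_zero_one)
    with integral_point_shift_prelimit[OF n borel_measurable_path_space_continuous[OF g(1)], of s]
    show "(\<integral>\<omega>. indicator {\<omega> \<in> space (Mn n). In n 0 \<omega> = 1} \<omega> * g1 (window U U (In n) \<omega>) \<partial>Mn n)
        = (\<integral>\<omega>. indicator {\<omega> \<in> space (Mn n). In n 0 \<omega> = 1} \<omega> * g2 (window U U (In n) \<omega>) \<partial>Mn n)"
      by (simp add: window cong: Bochner_Integration.integral_cong)
  qed (simp_all add: U_def bounded continuous)
  then show ?thesis
    by (simp only: window)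
qed

lemma integral_point_shift_cylinder:
  assumes J: "finite J"
  shows "(\<integral>\<omega>. soft_indicator {1} (I s \<omega>) * (\<Prod>j\<in>J. soft_indicator (A j) (I j \<omega>)) \<partial>M)
    = (\<integral>\<omega>. soft_indicator {1} (I (- s) \<omega>) * (\<Prod>j\<in>J. soft_indicator (A j) (I (j - s) \<omega>)) \<partial>M)"
proof -
  define u where "u = nat (Max (insert 0 (abs ` J)))"
  define g where "g x = (\<Prod>j\<in>J. soft_indicator (A j) (x j))" for x :: "int \<Rightarrow> real"
  have "\<bar>j\<bar> \<le> Max (insert 0 (abs ` J))" if "j \<in> J" for j
    using J that by (intro Max_ge) auto
  then have bound: "\<bar>j\<bar> \<le> int u" if "j \<in> J" for j
    using that unfolding u_def by fastforce
  have "j \<in> {- int u..int u}" if "j \<in> J" for j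
    using bound[OF that] by (auto simp: abs_le_iff)
  then have "g (\<lambda>t. if t \<in> {- int u..int u} then x t else 0) = g x" for x
    unfolding g_def by (intro prod.cong) auto
  moreover have "continuous_on UNIV g"
    unfolding g_def by (intro continuous_intros continuous_on_product_coordinates)
  moreover have "\<bar>g x\<bar> \<le> 1" for x
    using prod_soft_indicator_bounds[of A x J] by (simp add: g_def abs_le_iff)
  then have "bounded (range g)"
    by (auto intro!: boundedI[where B=1])
  ultimately show ?thesis
    using integral_point_shift[of g u s] by (simp add: g_def time_shift_def)
qed

lemma distr_density_point_shift:
  "distr (density M (\<lambda>\<omega>. ennreal (I s \<omega>))) path_space (\<lambda>\<omega> t. I t \<omega>)
    = distr (density M (\<lambda>\<omega>. ennreal (I (- s) \<omega>))) path_space (\<lambda>\<omega>. time_shift (- s) (\<lambda>t. I t \<omega>))"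
    (is "?P = ?Q")
proof -
  have shifted: "AE \<omega> in M. range (\<lambda>t. I (t + - s) \<omega>) \<subseteq> {0, 1}"
    using AE_zero_one_limit by eventually_elim auto
  have cylinder_P: "emeasure ?P (prod_emb UNIV (\<lambda>_. borel) J (Pi\<^sub>E J A))
      = ennreal (\<integral>\<omega>. soft_indicator {1} (I s \<omega>) * (\<Prod>j\<in>J. soft_indicator (A j) (I j \<omega>)) \<partial>M)"
    and cylinder_Q: "emeasure ?Q (prod_emb UNIV (\<lambda>_. borel) J (Pi\<^sub>E J A))
      = ennreal (\<integral>\<omega>. soft_indicator {1} (I (- s) \<omega>) * (\<Prod>j\<in>J. soft_indicator (A j) (I (j - s) \<omega>)) \<partial>M)"
    if J: "finite J" and A: "\<And>j. j \<in> J \<Longrightarrow> A j \<in> sets borel" for J A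
    using emeasure_distr_density_cylinder[OF measurable_I AE_zero_one_limit J A, where r=s]
      emeasure_distr_density_cylinder[OF _ shifted J A, where r=0]
    by (simp_all add: time_shift_def)
  show ?thesis
  proof (rule measure_eqI_PiM_infinite)
    show "emeasure ?P (prod_emb UNIV (\<lambda>_. borel) J (Pi\<^sub>E J A))
        = emeasure ?Q (prod_emb UNIV (\<lambda>_. borel) J (Pi\<^sub>E J A))"
      if "finite J" "J \<subseteq> UNIV" "\<And>j. j \<in> J \<Longrightarrow> A j \<in> sets borel" for J A
      using that by (simp add: cylinder_P cylinder_Q integral_point_shift_cylinder)
    have "space ?P = prod_emb UNIV (\<lambda>_. borel) {} (Pi\<^sub>E {} (\<lambda>_. UNIV))"
      by (auto simp: prod_emb_iff space_PiM restrict_def)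
    then show "finite_measure ?P"
      using cylinder_P[of "{}" "\<lambda>_. UNIV"] by (intro finite_measureI) simp
  qed simp_all
qed

end

sublocale palm_limit \<subseteq> point_stationary M I
proof
  show "AE \<omega> in M. range (\<lambda>t. I t \<omega>) \<subseteq> {0, 1}"
    by (rule AE_zero_one_limit)
  show "AE \<omega> in M. I 0 \<omega> = 1"
    by (rule AE_origin_limit)
  fix s and F :: "(int \<Rightarrow> real) \<Rightarrow> ennreal"
  assume [measurable]: "F \<in> borel_measurable path_space"
  have "(\<integral>\<^sup>+\<omega>. ennreal (I s \<omega>) * F (\<lambda>t. I t \<omega>) \<partial>M)
      = integral\<^sup>N (distr (density M (\<lambda>\<omega>. ennreal (I s \<omega>))) path_space (\<lambda>\<omega> t. I t \<omega>)) F"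
    by (simp add: nn_integral_distr nn_integral_density)
  also have "\<dots> = integral\<^sup>N (distr (density M (\<lambda>\<omega>. ennreal (I (- s) \<omega>))) path_space
      (\<lambda>\<omega>. time_shift (- s) (\<lambda>t. I t \<omega>))) F"
    by (simp only: distr_density_point_shift)
  also have "\<dots> = (\<integral>\<^sup>+\<omega>. ennreal (I (- s) \<omega>) * F (time_shift (- s) (\<lambda>t. I t \<omega>)) \<partial>M)"
    by (simp add: nn_integral_distr nn_integral_density)
  finally show "(\<integral>\<^sup>+\<omega>. ennreal (I s \<omega>) * F (\<lambda>t. I t \<omega>) \<partial>M)
      = (\<integral>\<^sup>+\<omega>. ennreal (I (- s) \<omega>) * F (time_shift (- s) (\<lambda>t. I t \<omega>)) \<partial>M)" .
qed (rule measurable_I)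

theorem theorem3p3:
  fixes M :: "'a measure" and I :: "int \<Rightarrow> 'a \<Rightarrow> real"
    and Mn :: "nat \<Rightarrow> 'b measure" and In :: "nat \<Rightarrow> int \<Rightarrow> 'b \<Rightarrow> real"
  assumes "prob_space M"
    and "\<And>t. I t \<in> borel_measurable M"
    and "\<And>n. n \<ge> 1 \<Longrightarrow> prob_space (Mn n)"
    and "\<And>n t. n \<ge> 1 \<Longrightarrow> In n t \<in> borel_measurable (Mn n)"
    and "\<And>n t \<omega>. n \<ge> 1 \<Longrightarrow> \<omega> \<in> space (Mn n) \<Longrightarrow> In n t \<omega> \<in> {0, 1}"
    and "\<And>n. n \<ge> 1 \<Longrightarrow> stationary (Mn n) (In n)"
    and "\<And>n. n \<ge> 1 \<Longrightarrow> measure (Mn n) {\<omega> \<in> space (Mn n). In n 0 \<omega> = 1} > 0"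
    and "\<And>u v (g :: (int \<Rightarrow> real) \<Rightarrow> real). u \<ge> 1 \<Longrightarrow> v \<ge> 1 \<Longrightarrow>
           continuous_on UNIV g \<Longrightarrow> bounded (range g) \<Longrightarrow>
           (\<lambda>n. cond_exp_ev (Mn n) {\<omega> \<in> space (Mn n). In n 0 \<omega> = 1}
                    (\<lambda>\<omega>. g (window u v (In n) \<omega>)))
           \<longlonglongrightarrow> (\<integral>\<omega>. g (window u v I \<omega>) \<partial>M)"
  shows "(\<forall>x. measure M {\<omega> \<in> space M. Splus I \<omega> = x}
              = measure M {\<omega> \<in> space M. Sminus I \<omega> = x})
    \<and> (\<forall>k::nat. k \<ge> 1 \<longrightarrow>
         measure M {\<omega> \<in> space M. Stot I \<omega> = of_nat k}
           = real k * (measure M {\<omega> \<in> space M. Splus I \<omega> = of_nat (k - 1)}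
                        - measure M {\<omega> \<in> space M. Splus I \<omega> = of_nat k})
       \<and> measure M {\<omega> \<in> space M. Stot I \<omega> = of_nat k}
           = real k * (measure M {\<omega> \<in> space M. Sminus I \<omega> = of_nat (k - 1)}
                        - measure M {\<omega> \<in> space M. Sminus I \<omega> = of_nat k}))
    \<and> (\<forall>k::nat. k \<ge> 1 \<longrightarrow> measure M {\<omega> \<in> space M. Stot I \<omega> = of_nat k} > 0 \<longrightarrow>
         (\<forall>l<k.
            cond_prob_ev M {\<omega> \<in> space M. Splus I \<omega> = of_nat l}
                           {\<omega> \<in> space M. Stot I \<omega> = of_nat k} = 1 / real k
          \<and> cond_prob_ev M {\<omega> \<in> space M. Sminus I \<omega> = of_nat l}
                           {\<omega> \<in> space M. Stot I \<omega> = of_nat k} = 1 / real k))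
    \<and> (measure M {\<omega> \<in> space M. Stot I \<omega> = \<infinity>} > 0 \<longrightarrow>
         cond_prob_ev M {\<omega> \<in> space M. Splus I \<omega> = \<infinity>}
                        {\<omega> \<in> space M. Stot I \<omega> = \<infinity>} = 1
       \<and> cond_prob_ev M {\<omega> \<in> space M. Sminus I \<omega> = \<infinity>}
                        {\<omega> \<in> space M. Stot I \<omega> = \<infinity>} = 1)"
proof -
  interpret palm_limit M I Mn In
    using assms by (intro palm_limit.intro palm_limit_axioms.intro) auto
  show ?thesis
    using measure_Splus_eq_Sminus measure_Stot_eq_Splus_diff measure_Stot_eq_Sminus_diff
      cond_prob_Splus_given_Stot cond_prob_Sminus_given_Stot
      cond_prob_Splus_given_Stot_infinite cond_prob_Sminus_given_Stot_infinite
    by simp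
qed

end
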